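(* If $\nu\in\left(-1,-\tfrac12\right]$ and $a,b\ge0$, then $$|\mathcal{I}_\nu(a)-\mathcal{I}_\nu(b)|\ge |a-b|\sqrt{\mathcal{I}_\nu'(a)\,\mathcal{I}_\nu'(b)}.$$ Moreover, this inequality holds for every $\nu>-1$ and all $a,b\in\left(0,\sqrt{2(\nu+3)}\right)$.
   Context: For $\nu>-1$ define $\mathcal{I}_\nu:\mathbb{R}\to[1,\infty)$ by $\mathcal{I}_\nu(x)=\sum_{n\ge0}\frac{(1/4)^n}{(\nu+1)_n\, n!}x^{2n}$, where $(a)_n=a(a+1)\cdots(a+n-1)$, $(a)_0=1$. Equivalently $\mathcal{I}_\nu(x)=2^\nu\Gamma(\nu+1)x^{-\nu}I_\nu(x)$ for $x>0$, where $I_\nu$ is the modified Bessel function of the first kind. *)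

theory Defs
  imports "HOL-Analysis.Analysis"
begin

text \<open>Normalized modified Bessel function
  calI nu x = sum_{n>=0} (1/4)^n / ((nu+1)_n n!) x^(2n), intended for nu > -1.\<close>
definition calI :: "real \<Rightarrow> real \<Rightarrow> real" where
  "calI \<nu> x = (\<Sum>n. (1/4) ^ n / (pochhammer (\<nu> + 1) n * fact n) * x ^ (2 * n))"

end

theory Submission
  imports Defs
begin

text \<open>
  Write \<open>calI \<nu> x = F\<^sub>\<nu>\<^sub>+\<^sub>1(x\<^sup>2)\<close>, where \<open>F\<^sub>q(z) = \<Sum>\<^sub>n z\<^sup>n / (4\<^sup>n (q)\<^sub>n n!)\<close> solves
  \<open>z F'' + q F' = F / 4\<close>; then \<open>calI\<^sub>\<nu>' x = x F\<^sub>\<nu>\<^sub>+\<^sub>2(x\<^sup>2) / (2 (\<nu> + 1))\<close>.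
  If \<open>G = calI\<^sub>\<nu>'\<close> is log-concave on \<open>[a, b]\<close>, then \<open>G t G (a + b - t) \<ge> G a G b\<close>, and integrating
  \<open>(G t + G (a + b - t)) / 2 \<ge> sqrt (G a G b)\<close> over \<open>[a, b]\<close> gives the inequality.
  Log-concavity of \<open>x F\<^sub>q(x\<^sup>2)\<close> amounts to \<open>J\<^sub>q(x\<^sup>2) \<ge> 0\<close> for the quadratic form
  \<open>J\<^sub>q = (1 - z) F\<^sup>2 + (4q - 2) z F F' + 4 z\<^sup>2 F'\<^sup>2\<close>. Comparing coefficients gives
  \<open>F' (4q(q + 1) + z) \<ge> (q + 1) F\<close>, which forces \<open>J\<^sub>q \<ge> 0\<close> for \<open>z \<le> 2 (q + 1)\<close>; beyond that point
  \<open>z\<^sup>-\<^sup>k J\<^sub>q(z)\<close> with \<open>k = (3 - 2q) / 2\<close> is nondecreasing, which covers all \<open>z\<close> when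
  \<open>q = \<nu> + 2 \<le> 3/2\<close>.
\<close>

lemma convex_on_cong_on:
  assumes "convex_on S f" and "\<And>x. x \<in> S \<Longrightarrow> f x = g x"
  shows "convex_on S g"
proof -
  have "g (u *\<^sub>R x + v *\<^sub>R y) \<le> u * g x + v * g y"
    if "x \<in> S" "y \<in> S" "u \<ge> 0" "v \<ge> 0" "u + v = 1" for x y u v
  proof -
    have "u *\<^sub>R x + v *\<^sub>R y \<in> S"
      using assms(1) that unfolding convex_on_def convex_def by blast
    moreover have "f (u *\<^sub>R x + v *\<^sub>R y) \<le> u * f x + v * f y"
      using assms(1) that unfolding convex_on_def by blast
    ultimately show ?thesis using assms(2) that by simp
  qed
  then show ?thesis using assms(1) unfolding convex_on_def by blast
qed

lemma log_concave_deriv_increment_ge: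
  fixes F G :: "real \<Rightarrow> real"
  assumes ab: "a \<le> b"
    and F: "\<And>x. x \<in> {a..b} \<Longrightarrow> (F has_real_derivative G x) (at x)"
    and G: "\<And>x. x \<in> {a..b} \<Longrightarrow> G x > 0"
    and log_concave: "convex_on {a..b} (\<lambda>x. - ln (G x))"
  shows "(b - a) * sqrt (G a * G b) \<le> F b - F a"
proof -
  have reflect: "G a * G b \<le> G t * G (a + b - t)" if t: "t \<in> {a..b}" for t
  proof (cases "a = b")
    case False
    define l where "l = (t - a) / (b - a)"
    have l: "0 \<le> l" "l \<le> 1" and "l * (b - a) = t - a"
      using t ab False unfolding l_def by auto
    then have "t = (1 - l) *\<^sub>R a + l *\<^sub>R b" and "a + b - t = (1 - (1 - l)) *\<^sub>R a + (1 - l) *\<^sub>R b"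
      by (simp_all add: algebra_simps)
    moreover have "a \<in> {a..b}" "b \<in> {a..b}" using ab by auto
    ultimately have "- ln (G t) \<le> (1 - l) * - ln (G a) + l * - ln (G b)"
      and "- ln (G (a + b - t)) \<le> (1 - (1 - l)) * - ln (G a) + (1 - l) * - ln (G b)"
      using convex_onD[OF log_concave, of l a b] convex_onD[OF log_concave, of "1 - l" a b] l
      by simp_all
    moreover have pos: "G a > 0" "G b > 0" "G t > 0" "G (a + b - t) > 0"
      using G t ab by auto
    ultimately have "ln (G a * G b) \<le> ln (G t * G (a + b - t))"
      by (simp add: ln_mult algebra_simps)
    then show ?thesis using pos by simp
  qed (use t in simp)
  define c where "c = sqrt (G a * G b)"
  define \<Psi> where "\<Psi> t = (F t - F (a + b - t)) / 2 - c * t" for t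
  have "\<Psi> a \<le> \<Psi> b"
  proof (rule DERIV_nonneg_imp_nondecreasing[of a b \<Psi>, OF ab])
    fix t assume t: "a \<le> t" "t \<le> b"
    have "((\<lambda>t. F (a + b - t)) has_real_derivative G (a + b - t) * - 1) (at t)"
      using t by (intro DERIV_chain2[OF F] derivative_eq_intros) auto
    then have "(\<Psi> has_real_derivative (G t - G (a + b - t) * - 1) / 2 - c * 1) (at t)"
      unfolding \<Psi>_def[abs_def] using t F[of t] by (intro derivative_eq_intros) auto
    moreover have "c \<le> (G t + G (a + b - t)) / 2"
    proof -
      have "c \<le> sqrt (G t * G (a + b - t))" unfolding c_def using reflect t by simp
      also have "\<dots> \<le> (G t + G (a + b - t)) / 2"
        using G t by (intro arith_geo_mean_sqrt less_imp_le) auto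
      finally show ?thesis .
    qed
    ultimately show "\<exists>y. (\<Psi> has_real_derivative y) (at t) \<and> 0 \<le> y" by force
  qed
  then show ?thesis unfolding \<Psi>_def c_def by (simp add: field_simps)
qed

definition pseries :: "(nat \<Rightarrow> real) \<Rightarrow> real \<Rightarrow> real" where
  "pseries a z = (\<Sum>n. a n * z ^ n)"

lemma pseries_has_real_derivative:
  assumes "\<And>y. summable (\<lambda>n. a n * y ^ n)"
  shows "(pseries a has_real_derivative pseries (diffs a) z) (at z)"
  unfolding pseries_def using termdiffs_strong_converges_everywhere[of a z] assms by simp

lemma pseries_has_real_derivative_chain:
  assumes "\<And>y. summable (\<lambda>n. a n * y ^ n)"
    and "(h has_real_derivative h') (at x within S)"
  shows "((\<lambda>x. pseries a (h x)) has_real_derivative pseries (diffs a) (h x) * h') (at x within S)"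
  using DERIV_chain2[OF pseries_has_real_derivative[OF assms(1)] assms(2)] .

lemma sums_of_nat_mult_pseries:
  assumes "\<And>y. summable (\<lambda>n. a n * y ^ n)"
  shows "(\<lambda>n. real n * a n * z ^ n) sums (z * pseries (diffs a) z)"
proof -
  have "(\<lambda>n. diffs a n * z ^ n) sums pseries (diffs a) z"
    unfolding pseries_def using termdiff_converges_all[OF assms] by (rule summable_sums)
  hence "(\<lambda>n. z * (diffs a n * z ^ n)) sums (z * pseries (diffs a) z)"
    by (rule sums_mult)
  moreover have "(\<lambda>n. z * (diffs a n * z ^ n)) = (\<lambda>n. real (Suc n) * a (Suc n) * z ^ Suc n)"
    by (auto simp: diffs_def)
  ultimately show ?thesis
    using sums_Suc_iff[where f = "\<lambda>n. real n * a n * z ^ n"] by simp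
qed

lemma pseries_pos:
  assumes "\<And>y. summable (\<lambda>n. a n * y ^ n)" and "\<And>n. a n > 0" and "z \<ge> 0"
  shows "pseries a z > 0"
  unfolding pseries_def
proof (rule suminf_pos2[where i = 0])
  show "0 \<le> a n * z ^ n" for n
    using assms(2)[of n] assms(3) by simp
qed (use assms in auto)

definition bessel_coeff :: "real \<Rightarrow> nat \<Rightarrow> real" where
  "bessel_coeff q n = (1/4) ^ n / (pochhammer q n * fact n)"

lemma calI_eq_pseries: "calI \<nu> x = pseries (bessel_coeff (\<nu> + 1)) (x\<^sup>2)"
  unfolding calI_def pseries_def bessel_coeff_def by (simp add: power_mult)

lemma bessel_coeff_pos: "q > 0 \<Longrightarrow> bessel_coeff q n > 0"
  unfolding bessel_coeff_def by (intro divide_pos_pos mult_pos_pos pochhammer_pos) auto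

lemma bessel_coeff_Suc:
  "q > 0 \<Longrightarrow> bessel_coeff q (Suc n) = bessel_coeff q n / (4 * real (Suc n) * (q + real n))"
  unfolding bessel_coeff_def using pochhammer_pos[of q n]
  by (simp add: pochhammer_rec' field_simps)

lemma diffs_bessel_coeff:
  "q > 0 \<Longrightarrow> diffs (bessel_coeff q) n = bessel_coeff q n / (4 * (q + real n))"
  unfolding diffs_def by (simp add: bessel_coeff_Suc del: of_nat_Suc)

lemma diffs_bessel_coeff_eq_shift:
  assumes "q > 0"
  shows "diffs (bessel_coeff q) n = bessel_coeff (q + 1) n / (4 * q)"
proof -
  have "pochhammer (q + 1) n \<noteq> 0" using pochhammer_pos[of "q + 1" n] \<open>q > 0\<close> by simp
  then show ?thesis
    unfolding diffs_def bessel_coeff_def by (simp add: pochhammer_rec)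
qed

lemma summable_bessel_coeff:
  assumes q: "q > 0"
  shows "summable (\<lambda>n. bessel_coeff q n * z ^ n)"
proof (rule summable_ratio_test[where c = "1/2" and N = "nat \<lceil>\<bar>z\<bar>\<rceil>"])
  fix n assume "n \<ge> nat \<lceil>\<bar>z\<bar>\<rceil>"
  hence "\<bar>z\<bar> \<le> real n" by linarith
  moreover have "1 * real n \<le> (2 * real (Suc n)) * (q + real n)"
    using q by (intro mult_mono) auto
  ultimately have "\<bar>z\<bar> / (4 * real (Suc n) * (q + real n)) \<le> 1/2"
    using q by (simp add: divide_simps del: of_nat_Suc)
  hence "bessel_coeff q n * \<bar>z\<bar> ^ n * (\<bar>z\<bar> / (4 * real (Suc n) * (q + real n)))
      \<le> bessel_coeff q n * \<bar>z\<bar> ^ n * (1/2)"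
    using bessel_coeff_pos[OF q, of n] by (intro mult_left_mono) auto
  thus "norm (bessel_coeff q (Suc n) * z ^ Suc n) \<le> 1/2 * norm (bessel_coeff q n * z ^ n)"
    using q by (simp add: bessel_coeff_Suc abs_mult power_abs abs_of_pos[OF bessel_coeff_pos[OF q]]
        field_simps del: of_nat_Suc)
qed auto

lemma summable_diffs_bessel_coeff:
  "q > 0 \<Longrightarrow> summable (\<lambda>n. diffs (bessel_coeff q) n * z ^ n)"
  by (rule termdiff_converges_all) (rule summable_bessel_coeff)

lemma pseries_bessel_coeff_pos:
  "q > 0 \<Longrightarrow> z \<ge> 0 \<Longrightarrow> pseries (bessel_coeff q) z > 0"
  by (intro pseries_pos summable_bessel_coeff bessel_coeff_pos)

lemma pseries_diffs_bessel_coeff: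
  "q > 0 \<Longrightarrow> pseries (diffs (bessel_coeff q)) z = pseries (bessel_coeff (q + 1)) z / (4 * q)"
  unfolding pseries_def diffs_bessel_coeff_eq_shift
  by (simp add: suminf_divide[OF summable_bessel_coeff, symmetric])

lemma bessel_ode:
  assumes q: "q > 0"
  defines "c \<equiv> bessel_coeff q"
  shows "z * pseries (diffs (diffs c)) z + q * pseries (diffs c) z = pseries c z / 4"
proof -
  have "(\<lambda>n. real n * diffs c n * z ^ n) sums (z * pseries (diffs (diffs c)) z)"
    unfolding c_def using summable_diffs_bessel_coeff[OF q] by (rule sums_of_nat_mult_pseries)
  moreover have "(\<lambda>n. q * (diffs c n * z ^ n)) sums (q * pseries (diffs c) z)"
    unfolding pseries_def c_def
    by (intro sums_mult summable_sums summable_diffs_bessel_coeff q)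
  ultimately have "(\<lambda>n. real n * diffs c n * z ^ n + q * (diffs c n * z ^ n))
      sums (z * pseries (diffs (diffs c)) z + q * pseries (diffs c) z)"
    by (rule sums_add)
  moreover have "real n * diffs c n * z ^ n + q * (diffs c n * z ^ n) = c n * z ^ n / 4" for n
  proof -
    have "q + real n > 0" using q by simp
    then show ?thesis unfolding c_def diffs_bessel_coeff[OF q]
      by (simp add: divide_simps) (simp add: algebra_simps)
  qed
  moreover have "(\<lambda>n. c n * z ^ n / 4) sums (pseries c z / 4)"
    unfolding pseries_def c_def by (intro sums_divide summable_sums summable_bessel_coeff q)
  ultimately show ?thesis by (metis (no_types, lifting) sums_unique2 sums_cong)
qed

lemma bessel_ratio_bound:
  assumes q: "q > 0" and z: "z \<ge> 0"
  defines "c \<equiv> bessel_coeff q"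
  shows "(q + 1) * pseries c z \<le> pseries (diffs c) z * (4 * q * (q + 1) + z)"
proof -
  have sums: "(\<lambda>n. 4 * q * (q + 1) * (diffs c n * z ^ n) + real n * c n * z ^ n - (q + 1) * (c n * z ^ n))
      sums (4 * q * (q + 1) * pseries (diffs c) z + z * pseries (diffs c) z - (q + 1) * pseries c z)"
  proof (intro sums_diff sums_add sums_mult)
    show "(\<lambda>n. diffs c n * z ^ n) sums pseries (diffs c) z"
      unfolding pseries_def c_def using summable_diffs_bessel_coeff[OF q] by (rule summable_sums)
    show "(\<lambda>n. c n * z ^ n) sums pseries c z"
      unfolding pseries_def c_def using summable_bessel_coeff[OF q] by (rule summable_sums)
    show "(\<lambda>n. real n * c n * z ^ n) sums (z * pseries (diffs c) z)"
      unfolding c_def using summable_bessel_coeff[OF q] by (rule sums_of_nat_mult_pseries)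
  qed
  have terms_nonneg:
    "0 \<le> 4 * q * (q + 1) * (diffs c n * z ^ n) + real n * c n * z ^ n - (q + 1) * (c n * z ^ n)" for n
  proof -
    have "q + real n > 0" using q by simp
    then have "4 * q * (q + 1) * (diffs c n * z ^ n) + real n * c n * z ^ n - (q + 1) * (c n * z ^ n)
      = c n * z ^ n * (real n * (real n - 1)) / (q + real n)"
      unfolding c_def diffs_bessel_coeff[OF q] by (simp add: field_simps)
    moreover have "0 \<le> c n * z ^ n * (real n * (real n - 1)) / (q + real n)"
    proof (rule divide_nonneg_pos[OF mult_nonneg_nonneg \<open>q + real n > 0\<close>])
      show "0 \<le> c n * z ^ n" using bessel_coeff_pos[OF q, of n] z unfolding c_def by simp
      show "0 \<le> real n * (real n - 1)" by (cases n) auto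
    qed
    ultimately show ?thesis by simp
  qed
  have "0 \<le> 4 * q * (q + 1) * pseries (diffs c) z + z * pseries (diffs c) z - (q + 1) * pseries c z"
    by (rule sums_le[OF terms_nonneg sums_zero sums])
  then show ?thesis by (simp add: algebra_simps)
qed

lemma quadratic_form_nonneg_of_ratio_bound:
  fixes q z E D :: real
  assumes q: "1/2 \<le> q" and z: "0 \<le> z" "z \<le> 2 * (q + 1)" and E: "E > 0"
    and ratio: "(q + 1) * E \<le> D * (4 * q * (q + 1) + z)"
  shows "0 \<le> (1 - z) * E\<^sup>2 + (4 * q - 2) * z * E * D + 4 * z\<^sup>2 * D\<^sup>2"
proof -
  define K where "K = 4 * q * (q + 1) + z"
  define X where "X = z * D * K"
  define Y where "Y = z * (q + 1) * E"
  have K: "K > 0" unfolding K_def using q z by (simp add: add_pos_nonneg)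
  have Y: "0 \<le> Y" unfolding Y_def using q z E by simp
  have XY: "Y \<le> X" unfolding X_def Y_def K_def using mult_left_mono[OF ratio z(1)] by (simp add: algebra_simps)
  have "((1 - z) * E\<^sup>2 + (4 * q - 2) * z * E * D + 4 * z\<^sup>2 * D\<^sup>2) * K\<^sup>2
      = 4 * X\<^sup>2 + (4 * q - 2) * E * K * X + (1 - z) * E\<^sup>2 * K\<^sup>2"
    unfolding X_def by (simp add: algebra_simps power2_eq_square)
  also have "\<dots> \<ge> 4 * Y\<^sup>2 + (4 * q - 2) * E * K * Y + (1 - z) * E\<^sup>2 * K\<^sup>2"
  proof -
    have "Y\<^sup>2 \<le> X\<^sup>2" using XY Y by (simp add: power_mono)
    moreover have "(4 * q - 2) * E * K * Y \<le> (4 * q - 2) * E * K * X"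
      using XY q E K by (intro mult_left_mono) auto
    ultimately show ?thesis by simp
  qed
  also have "4 * Y\<^sup>2 + (4 * q - 2) * E * K * Y + (1 - z) * E\<^sup>2 * K\<^sup>2
      = E\<^sup>2 * (8 * q\<^sup>2 * (q + 1) * (2 * (q + 1) - z) + z\<^sup>2 * (2 * q + 3 - z))"
    unfolding Y_def K_def by (simp add: algebra_simps power2_eq_square)
  also have "\<dots> \<ge> 0" using q z by (intro mult_nonneg_nonneg add_nonneg_nonneg) auto
  finally show ?thesis using K by (simp add: zero_le_mult_iff)
qed

text \<open>With \<open>F = pseries (bessel_coeff q)\<close>, \<open>bessel_disc q (x\<^sup>2)\<close> is \<open>x\<^sup>2 F(x\<^sup>2)\<^sup>2\<close> times the
  second derivative of \<open>- ln (x F(x\<^sup>2))\<close>, after eliminating \<open>F''\<close> by the Bessel equation.\<close>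

definition bessel_disc :: "real \<Rightarrow> real \<Rightarrow> real" where
  "bessel_disc q z =
    (1 - z) * (pseries (bessel_coeff q) z)\<^sup>2
    + (4 * q - 2) * z * pseries (bessel_coeff q) z * pseries (diffs (bessel_coeff q)) z
    + 4 * z\<^sup>2 * (pseries (diffs (bessel_coeff q)) z)\<^sup>2"

lemma bessel_disc_nonneg_small:
  assumes "1/2 \<le> q" "0 \<le> z" "z \<le> 2 * (q + 1)"
  shows "bessel_disc q z \<ge> 0"
  unfolding bessel_disc_def using assms
  by (intro quadratic_form_nonneg_of_ratio_bound bessel_ratio_bound pseries_bessel_coeff_pos) auto

lemma bessel_le_two_mult_deriv:
  assumes q: "q > 0" and t: "2 * (q + 1) \<le> t"
  defines "c \<equiv> bessel_coeff q"
  shows "pseries c t \<le> 2 * t * pseries (diffs c) t"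
proof -
  define K where "K = 4 * q * (q + 1) + t"
  have K: "K > 0" and E: "pseries c t > 0"
    using q t pseries_bessel_coeff_pos[OF q, of t] unfolding K_def c_def by (auto simp: add_pos_nonneg)
  have "K * pseries c t \<le> 2 * t * (q + 1) * pseries c t"
  proof (rule mult_right_mono)
    have "2 * (q + 1) * (2 * q + 1) \<le> t * (2 * q + 1)" using q t by (intro mult_right_mono) auto
    then show "K \<le> 2 * t * (q + 1)" using q unfolding K_def by (simp add: algebra_simps)
  qed (use E in simp)
  also have "\<dots> \<le> 2 * t * (pseries (diffs c) t * K)"
    using bessel_ratio_bound[OF q, of t] q t unfolding c_def K_def by simp
  finally have "K * pseries c t \<le> K * (2 * t * pseries (diffs c) t)" by (simp add: algebra_simps)
  then show ?thesis using K by simp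
qed

lemma bessel_disc_has_real_derivative:
  assumes q: "q > 0" and t: "t \<noteq> 0"
  defines "f \<equiv> pseries (bessel_coeff q) t" and "g \<equiv> pseries (diffs (bessel_coeff q)) t"
  shows "(bessel_disc q has_real_derivative
          (3 - 2 * q) / (2 * t) * (bessel_disc q t + f * (2 * t * g - f))) (at t)"
proof -
  define h where "h = pseries (diffs (diffs (bessel_coeff q))) t"
  note [derivative_intros] =
    pseries_has_real_derivative_chain[OF summable_bessel_coeff[OF q]]
    pseries_has_real_derivative_chain[OF summable_diffs_bessel_coeff[OF q]]
  have h_eq: "h = (f / 4 - q * g) / t"
    using bessel_ode[OF q, of t] t unfolding f_def g_def h_def by (simp add: field_simps)
  have "(bessel_disc q has_real_derivative
      (1 - t) * (2 * f * g) - f\<^sup>2 + (4 * q - 2) * (f * g + t * g * g + t * f * h)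
      + 8 * t * g\<^sup>2 + 4 * t\<^sup>2 * (2 * g * h)) (at t)"
    unfolding bessel_disc_def[abs_def] f_def g_def h_def
    by (rule derivative_eq_intros refl | simp)+ (simp add: algebra_simps power2_eq_square)
  moreover have "(1 - t) * (2 * f * g) - f\<^sup>2 + (4 * q - 2) * (f * g + t * g * g + t * f * h)
      + 8 * t * g\<^sup>2 + 4 * t\<^sup>2 * (2 * g * h)
      = (3 - 2 * q) / (2 * t) * (bessel_disc q t + f * (2 * t * g - f))"
    using t unfolding h_eq bessel_disc_def f_def[symmetric] g_def[symmetric]
    by (simp add: field_simps power2_eq_square)
  ultimately show ?thesis by simp
qed

lemma bessel_disc_nonneg_large:
  assumes q: "1/2 \<le> q" "q \<le> 3/2" and z: "2 * (q + 1) \<le> z"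
  shows "bessel_disc q z \<ge> 0"
proof -
  define z0 where "z0 = 2 * (q + 1)"
  define k where "k = (3 - 2 * q) / 2"
  have q0: "q > 0" and z0: "z0 > 0" and k: "k \<ge> 0"
    using q unfolding z0_def k_def by auto
  define L where "L t = t powr (-k) * bessel_disc q t" for t
  \<comment> \<open>\<open>t powr -k\<close> is an integrating factor for the derivative formula of \<open>bessel_disc\<close>.\<close>
  have "L z0 \<le> L z"
  proof (rule DERIV_nonneg_imp_nondecreasing[of z0 z L])
    show "z0 \<le> z" using z unfolding z0_def .
    fix t assume t: "z0 \<le> t" "t \<le> z"
    then have "t > 0" using z0 by simp
    define f where "f = pseries (bessel_coeff q) t"
    define g where "g = pseries (diffs (bessel_coeff q)) t"
    have "(bessel_disc q has_real_derivative k / t * (bessel_disc q t + f * (2 * t * g - f))) (at t)"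
      using bessel_disc_has_real_derivative[OF q0, of t] \<open>t > 0\<close> unfolding k_def f_def g_def by simp
    from DERIV_mult[OF has_real_derivative_powr[OF \<open>t > 0\<close>, of "-k"] this]
    have "(L has_real_derivative
        (-k) * t powr (-k - 1) * bessel_disc q t + k / t * (bessel_disc q t + f * (2 * t * g - f)) * t powr (-k)) (at t)"
      unfolding L_def[abs_def] .
    moreover have "(-k) * t powr (-k - 1) * bessel_disc q t + k / t * (bessel_disc q t + f * (2 * t * g - f)) * t powr (-k)
        = k * t powr (-k - 1) * f * (2 * t * g - f)"
      using \<open>t > 0\<close> by (simp add: powr_diff field_simps)
    moreover have "0 \<le> k * t powr (-k - 1) * f * (2 * t * g - f)"
      using k pseries_bessel_coeff_pos[OF q0, of t] \<open>t > 0\<close>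
        bessel_le_two_mult_deriv[OF q0, of t] t(1)
      unfolding f_def g_def z0_def by simp
    ultimately show "\<exists>y. (L has_real_derivative y) (at t) \<and> 0 \<le> y" by auto
  qed
  moreover have "0 \<le> L z0"
    unfolding L_def z0_def using bessel_disc_nonneg_small[OF q(1), of "2 * (q + 1)"] q0 by simp
  ultimately have "0 \<le> z powr (-k) * bessel_disc q z" unfolding L_def by linarith
  moreover have "z > 0" using z0 z unfolding z0_def by linarith
  ultimately show ?thesis by (simp add: zero_le_mult_iff)
qed

lemma bessel_disc_nonneg:
  assumes "1/2 \<le> q" "q \<le> 3/2" "0 \<le> z"
  shows "bessel_disc q z \<ge> 0"
  using bessel_disc_nonneg_small[of q z] bessel_disc_nonneg_large[of q z] assms by linarith

lemma convex_on_neg_ln_bessel: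
  assumes q: "q > 0" and a: "0 < a"
    and disc: "\<And>x. x \<in> {a..b} \<Longrightarrow> bessel_disc q (x\<^sup>2) \<ge> 0"
  shows "convex_on {a..b} (\<lambda>x. - ln (x * pseries (bessel_coeff q) (x\<^sup>2)))"
proof -
  define c where "c = bessel_coeff q"
  define f where "f x = pseries c (x\<^sup>2)" for x
  define g where "g x = pseries (diffs c) (x\<^sup>2)" for x
  define h where "h x = pseries (diffs (diffs c)) (x\<^sup>2)" for x
  define v' where "v' x = - (1 / x + 2 * x * g x / f x)" for x
  define v'' where "v'' x = 1 / x\<^sup>2 - (2 * g x + 4 * x\<^sup>2 * h x) / f x + 4 * x\<^sup>2 * (g x)\<^sup>2 / (f x)\<^sup>2" for x
  note [derivative_intros] =
    pseries_has_real_derivative_chain[OF summable_bessel_coeff[OF q]]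
    pseries_has_real_derivative_chain[OF summable_diffs_bessel_coeff[OF q]]
  have df: "(f has_real_derivative g x * (2 * x)) (at x)" for x
    unfolding f_def g_def c_def by (rule derivative_eq_intros refl)+ simp
  have dg: "(g has_real_derivative h x * (2 * x)) (at x)" for x
    unfolding g_def h_def c_def by (rule derivative_eq_intros refl)+ simp
  show ?thesis
  proof (rule f''_ge0_imp_convex[where f' = v' and f'' = v''])
    fix x assume "x \<in> {a..b}"
    then have x: "x > 0" using a by simp
    have f: "f x > 0" unfolding f_def c_def using pseries_bessel_coeff_pos[OF q] by simp
    have "((\<lambda>x. x * f x) has_real_derivative f x + g x * (2 * x) * x) (at x)"
      using DERIV_mult[OF DERIV_ident df] by simp
    from DERIV_chain2[OF DERIV_ln_divide this] x f
    have "((\<lambda>x. - ln (x * f x)) has_real_derivative - ((f x + g x * (2 * x) * x) / (x * f x))) (at x)"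
      by (intro DERIV_minus) simp
    then show "((\<lambda>x. - ln (x * pseries (bessel_coeff q) (x\<^sup>2))) has_real_derivative v' x) (at x)"
      using x f unfolding v'_def f_def c_def by (simp add: field_simps power2_eq_square)
    have "((\<lambda>x. 2 * x * g x) has_real_derivative 2 * g x + 2 * x * (h x * (2 * x))) (at x)"
      using DERIV_mult[OF DERIV_cmult[OF DERIV_ident, of 2] dg] by (simp add: algebra_simps)
    from DERIV_divide[OF this df] f
    have "((\<lambda>x. 2 * x * g x / f x) has_real_derivative
        ((2 * g x + 2 * x * (h x * (2 * x))) * f x - 2 * x * g x * (g x * (2 * x))) / (f x * f x)) (at x)"
      by simp
    from DERIV_minus[OF DERIV_add[OF DERIV_divide[OF DERIV_const DERIV_ident] this]] x
    have "(v' has_real_derivative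
        - ((0 * x - 1 * 1) / (x * x) + ((2 * g x + 2 * x * (h x * (2 * x))) * f x
          - 2 * x * g x * (g x * (2 * x))) / (f x * f x))) (at x)"
      unfolding v'_def by simp
    moreover have "- ((0 * x - 1 * 1) / (x * x) + ((2 * g x + 2 * x * (h x * (2 * x))) * f x
        - 2 * x * g x * (g x * (2 * x))) / (f x * f x)) = v'' x"
      unfolding v''_def using x f by (simp add: field_simps power2_eq_square)
    ultimately show "(v' has_real_derivative v'' x) (at x)" by simp
    have h: "h x = (f x / 4 - q * g x) / x\<^sup>2"
      using bessel_ode[OF q, of "x\<^sup>2"] x unfolding f_def g_def h_def c_def by (simp add: field_simps)
    have disc_eq: "bessel_disc q (x\<^sup>2) = (1 - x\<^sup>2) * (f x)\<^sup>2 + (4 * q - 2) * x\<^sup>2 * f x * g x + 4 * (x\<^sup>2)\<^sup>2 * (g x)\<^sup>2"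
      unfolding bessel_disc_def f_def g_def c_def ..
    have "v'' x * (x\<^sup>2 * (f x)\<^sup>2) = bessel_disc q (x\<^sup>2)"
      using x f unfolding v''_def disc_eq h by (simp add: field_simps power2_eq_square)
    with disc[OF \<open>x \<in> {a..b}\<close>] have "0 \<le> v'' x * (x\<^sup>2 * (f x)\<^sup>2)" by simp
    moreover have "x\<^sup>2 * (f x)\<^sup>2 > 0" using x f by simp
    ultimately show "v'' x \<ge> 0" by (simp add: zero_le_mult_iff)
  qed simp
qed

lemma calI_has_real_derivative:
  assumes "\<nu> > -1"
  shows "(calI \<nu> has_real_derivative x * pseries (bessel_coeff (\<nu> + 2)) (x\<^sup>2) / (2 * (\<nu> + 1))) (at x)"
proof -
  have q: "\<nu> + 1 > 0" using assms by simp
  have "((\<lambda>x. pseries (bessel_coeff (\<nu> + 1)) (x\<^sup>2)) has_real_derivative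
      pseries (diffs (bessel_coeff (\<nu> + 1))) (x\<^sup>2) * (2 * x)) (at x)"
    by (rule pseries_has_real_derivative_chain[OF summable_bessel_coeff[OF q]])
      (rule derivative_eq_intros refl | simp)+
  moreover have "pseries (diffs (bessel_coeff (\<nu> + 1))) (x\<^sup>2) * (2 * x)
      = x * pseries (bessel_coeff (\<nu> + 2)) (x\<^sup>2) / (2 * (\<nu> + 1))"
    using q by (simp add: pseries_diffs_bessel_coeff field_simps)
  ultimately show ?thesis unfolding calI_eq_pseries[abs_def] by simp
qed

lemma deriv_calI:
  "\<nu> > -1 \<Longrightarrow> deriv (calI \<nu>) x = x * pseries (bessel_coeff (\<nu> + 2)) (x\<^sup>2) / (2 * (\<nu> + 1))"
  by (rule DERIV_imp_deriv) (rule calI_has_real_derivative)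

lemma calI_increment_ge:
  assumes \<nu>: "\<nu> > -1" and a: "0 < a" and ab: "a \<le> b"
    and disc: "\<And>x. x \<in> {a..b} \<Longrightarrow> bessel_disc (\<nu> + 2) (x\<^sup>2) \<ge> 0"
  shows "(b - a) * sqrt (deriv (calI \<nu>) a * deriv (calI \<nu>) b) \<le> calI \<nu> b - calI \<nu> a"
proof (rule log_concave_deriv_increment_ge[OF ab])
  have q: "\<nu> + 2 > 0" using \<nu> by simp
  define H where "H x = x * pseries (bessel_coeff (\<nu> + 2)) (x\<^sup>2)" for x
  have H: "H x > 0" if "x \<in> {a..b}" for x
    using that a pseries_bessel_coeff_pos[OF q] unfolding H_def by simp
  have deriv_eq: "deriv (calI \<nu>) x = H x / (2 * (\<nu> + 1))" for x
    unfolding H_def deriv_calI[OF \<nu>] ..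
  show "(calI \<nu> has_real_derivative deriv (calI \<nu>) x) (at x)" for x
    unfolding deriv_calI[OF \<nu>] using \<nu> by (rule calI_has_real_derivative)
  show "deriv (calI \<nu>) x > 0" if "x \<in> {a..b}" for x
    unfolding deriv_eq using H[OF that] \<nu> by simp
  have "convex_on {a..b} (\<lambda>x. - ln (H x) + ln (2 * (\<nu> + 1)))"
    unfolding H_def using q a disc by (intro convex_on_add convex_on_neg_ln_bessel) (auto simp: convex_on_const)
  then show "convex_on {a..b} (\<lambda>x. - ln (deriv (calI \<nu>) x))"
  proof (rule convex_on_cong_on)
    fix x assume "x \<in> {a..b}"
    then show "- ln (H x) + ln (2 * (\<nu> + 1)) = - ln (deriv (calI \<nu>) x)"
      using H[of x] \<nu> by (simp add: deriv_eq ln_div)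
  qed
qed

lemma calI_abs_increment_ge:
  assumes \<nu>: "\<nu> > -1" and ab: "0 \<le> a" "0 \<le> b"
    and disc: "\<And>x. 0 < x \<Longrightarrow> min a b \<le> x \<Longrightarrow> x \<le> max a b \<Longrightarrow> bessel_disc (\<nu> + 2) (x\<^sup>2) \<ge> 0"
  shows "\<bar>a - b\<bar> * sqrt (deriv (calI \<nu>) a * deriv (calI \<nu>) b) \<le> \<bar>calI \<nu> a - calI \<nu> b\<bar>"
proof (cases "a = 0 \<or> b = 0")
  case True
  then have "deriv (calI \<nu>) a * deriv (calI \<nu>) b = 0" using deriv_calI[OF \<nu>] by auto
  then show ?thesis by (metis abs_ge_zero mult_zero_right real_sqrt_zero)
next
  case False
  then have pos: "0 < a" "0 < b" using ab by auto
  consider "a \<le> b" | "b \<le> a" by linarith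
  then show ?thesis
  proof cases
    case 1
    have "(b - a) * sqrt (deriv (calI \<nu>) a * deriv (calI \<nu>) b) \<le> calI \<nu> b - calI \<nu> a"
      using pos 1 disc by (intro calI_increment_ge[OF \<nu> pos(1) 1]) auto
    then show ?thesis using 1 by (simp add: abs_if)
  next
    case 2
    have "(a - b) * sqrt (deriv (calI \<nu>) b * deriv (calI \<nu>) a) \<le> calI \<nu> a - calI \<nu> b"
      using pos 2 disc by (intro calI_increment_ge[OF \<nu> pos(2) 2]) auto
    then show ?thesis using 2 by (simp add: abs_if mult.commute)
  qed
qed

theorem corollary1:
  shows "(\<forall>\<nu> a b :: real. -1 < \<nu> \<and> \<nu> \<le> -1/2 \<and> 0 \<le> a \<and> 0 \<le> b \<longrightarrow>
            \<bar>calI \<nu> a - calI \<nu> b\<bar> \<ge> \<bar>a - b\<bar> * sqrt (deriv (calI \<nu>) a * deriv (calI \<nu>) b))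
       \<and> (\<forall>\<nu> a b :: real. -1 < \<nu> \<and> a \<in> {0<..<sqrt (2 * (\<nu> + 3))} \<and> b \<in> {0<..<sqrt (2 * (\<nu> + 3))} \<longrightarrow>
            \<bar>calI \<nu> a - calI \<nu> b\<bar> \<ge> \<bar>a - b\<bar> * sqrt (deriv (calI \<nu>) a * deriv (calI \<nu>) b))"
proof (intro conjI allI impI)
  fix \<nu> a b :: real
  assume "-1 < \<nu> \<and> \<nu> \<le> -1/2 \<and> 0 \<le> a \<and> 0 \<le> b"
  then show "\<bar>a - b\<bar> * sqrt (deriv (calI \<nu>) a * deriv (calI \<nu>) b) \<le> \<bar>calI \<nu> a - calI \<nu> b\<bar>"
    by (intro calI_abs_increment_ge bessel_disc_nonneg) auto
next
  fix \<nu> a b :: real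
  assume h: "-1 < \<nu> \<and> a \<in> {0<..<sqrt (2 * (\<nu> + 3))} \<and> b \<in> {0<..<sqrt (2 * (\<nu> + 3))}"
  have "x\<^sup>2 \<le> 2 * (\<nu> + 2 + 1)" if "0 < x" "x \<le> max a b" for x
  proof -
    have "x < sqrt (2 * (\<nu> + 3))" using that h by auto
    then have "x\<^sup>2 < (sqrt (2 * (\<nu> + 3)))\<^sup>2" using that by (intro power_strict_mono) auto
    then show ?thesis using h by simp
  qed
  then show "\<bar>a - b\<bar> * sqrt (deriv (calI \<nu>) a * deriv (calI \<nu>) b) \<le> \<bar>calI \<nu> a - calI \<nu> b\<bar>"
    using h by (intro calI_abs_increment_ge bessel_disc_nonneg_small) auto
qed

end
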